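(* Let $0<q<1/2$, $p=1-q$, $\lambda=q/p<1$, and let $z\geq 1$ and $A\geq z$ be integers. The probability $P_A(z)$ that the $A$-Nakamoto double spend attack (described in the context) succeeds is $$P_A(z)=\frac{I_{4pq}(z,1/2)-\lambda^{A+1}}{1-\lambda^{A+1}},$$ where $I_x(a,b)=\frac{\Gamma(a+b)}{\Gamma(a)\Gamma(b)}\int_0^x t^{a-1}(1-t)^{b-1}\,dt$ is the regularized incomplete Beta function and $\Gamma$ is Euler's Gamma function.
   Context: Mining model: the attacker has relative hashrate $q$ and the honest miners relative hashrate $p=1-q$; blocks found by the honest miners and by the attacker form independent Poisson processes with rates $p/\tau_0$ and $q/\tau_0$ respectively ($\tau_0>0$ the mean interblock time); block propagation is instantaneous and difficulty is constant. The recipient of a transaction requires $z$ confirmations. The $A$-Nakamoto double spend strategy (with one pre-mined block) is: (1) the attacker mines on top of the last block of the official blockchain a block containing a transaction returning the payment funds to an address he controls; if the honest miners find a block first, he restarts mining on top of the new last official block; (2) once he has mined this one block (kept secret, with the honest miners not having found a block meanwhile), he sends the paying transaction to the vendor and keeps mining on his secret fork, while the honest miners extend the official chain; (3) the lag is (number of official blocks after the fork point) minus (number of blocks of the secret fork); if the lag reaches $A$ the attacker gives up and the attack fails; (4) if, at a moment when the official chain has added at least $z$ blocks (confirmations of the vendor transaction), the secret fork is strictly longer than the official chain (lag $\leq -1$), the attacker publishes it and the attack succeeds. The attack cycle ends at success or failure. *)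

theory Defs
  imports "HOL-Probability.Probability"
begin

text \<open>Since the honest and attacker
block discoveries are independent Poisson processes with rates p/tau0 and q/tau0,
the sequence of successive blocks (ignoring times) is i.i.d.: each block is found by
the attacker with probability q (True) and by the honest miners with probability p
(False).\<close>

text \<open>Phase (1): the attacker restarts whenever an honest block comes first, so the
pre-mining phase ends at the first attacker block.\<close>
definition premine_end :: "bool stream \<Rightarrow> nat" where
  "premine_end \<omega> = (LEAST k. \<omega> !! k)"

text \<open>Number of official (honest) blocks after the fork point, after n further blocks
have been found in phase (2) (= confirmations of the vendor transaction).\<close>
definition honest_blocks :: "bool stream \<Rightarrow> nat \<Rightarrow> nat" where
  "honest_blocks \<omega> n = card {i \<in> {1..n}. \<not> \<omega> !! (premine_end \<omega> + i)}"

text \<open>Number of blocks of the secret fork (including the pre-mined block).\<close>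
definition attacker_blocks :: "bool stream \<Rightarrow> nat \<Rightarrow> nat" where
  "attacker_blocks \<omega> n = 1 + card {i \<in> {1..n}. \<omega> !! (premine_end \<omega> + i)}"

definition lag :: "bool stream \<Rightarrow> nat \<Rightarrow> int" where
  "lag \<omega> n = int (honest_blocks \<omega> n) - int (attacker_blocks \<omega> n)"

definition attack_succeeds :: "nat \<Rightarrow> nat \<Rightarrow> bool stream \<Rightarrow> bool" where
  "attack_succeeds z A \<omega> \<longleftrightarrow> (\<exists>k. \<omega> !! k) \<and>
     (\<exists>n. honest_blocks \<omega> n \<ge> z \<and> lag \<omega> n \<le> -1 \<and> (\<forall>m\<le>n. lag \<omega> m < int A))"

definition block_space :: "real \<Rightarrow> bool stream measure" where
  "block_space q = stream_space (measure_pmf (bernoulli_pmf q))"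

definition P_A :: "real \<Rightarrow> nat \<Rightarrow> nat \<Rightarrow> real" where
  "P_A q A z = measure (block_space q) {\<omega> \<in> space (block_space q). attack_succeeds z A \<omega>}"

definition reg_inc_beta :: "real \<Rightarrow> real \<Rightarrow> real \<Rightarrow> real" where
  "reg_inc_beta x a b = Gamma (a + b) / (Gamma a * Gamma b) *
     integral {0..x} (\<lambda>t. t powr (a - 1) * (1 - t) powr (b - 1))"

end

(* The lag performs a random walk driven by the i.i.d. block outcomes. The law of the stream
   after the first attacker block is again the block law, so P_A is the winning probability
   of the walk started with lag -1 and z confirmations missing. That probability obeys the
   first-step recursion, and so does the affine image (Phi - lambda^(A+1)) / (1 - lambda^(A+1))
   of the closed-form winning probability Phi of an attacker who never gives up: both equal 1
   once the attacker has won, and since A >= z the lag A is only reached after the last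
   confirmation, where Phi = lambda^(A+1) and the affine image vanishes. The two solutions
   agree by a gambler's-ruin uniqueness argument once the confirmations are in, and by
   induction on the number of missing confirmations before.
   Finally Phi(z, z) = I_{4pq}(z, 1/2): as a function of q, Phi(z, z) has derivative
   c (q (1 - q))^(z-1), and the substitution y = 4 q (1 - q) turns this into the Beta
   integrand y^(z-1) (1 - y)^(-1/2). *)

theory Submission
  imports Defs
begin

text \<open>For k = 0 the truncated subtraction leaves only the term a = 0.\<close>
definition negbin_sum :: "nat \<Rightarrow> nat \<Rightarrow> real \<Rightarrow> real" where
  "negbin_sum k n x = (\<Sum>a<n. real ((k + a - 1) choose a) * x ^ a)"

lemma negbin_sum_0_left: "negbin_sum 0 n x = (if n = 0 then 0 else 1)"
  by (induction n) (auto simp: negbin_sum_def)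

lemma negbin_sum_Suc: "negbin_sum k (Suc n) x = negbin_sum k n x + real ((k + n - 1) choose n) * x ^ n"
  by (simp add: negbin_sum_def)

lemma negbin_sum_Suc_Suc:
  "negbin_sum (Suc k) (Suc n) x = negbin_sum k (Suc n) x + x * negbin_sum (Suc k) n x"
proof (induction n)
  case 0
  then show ?case by (simp add: negbin_sum_def)
next
  case (Suc n)
  have pascal: "real ((Suc k + Suc n - 1) choose Suc n)
      = real ((k + Suc n - 1) choose Suc n) + real ((Suc k + n - 1) choose n)"
    by (cases k) simp_all
  have "negbin_sum (Suc k) (Suc (Suc n)) x
      = negbin_sum k (Suc n) x + x * negbin_sum (Suc k) n x
        + (real ((k + Suc n - 1) choose Suc n) + real ((Suc k + n - 1) choose n)) * x ^ Suc n"
    by (simp only: negbin_sum_Suc[of "Suc k" "Suc n"] Suc.IH pascal)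
  also have "\<dots> = negbin_sum k (Suc (Suc n)) x + x * negbin_sum (Suc k) (Suc n) x"
    by (simp add: negbin_sum_Suc[of k "Suc n"] negbin_sum_Suc[of "Suc k" n] algebra_simps)
  finally show ?case .
qed

text \<open>race_success q k n is the winning probability of an attacker who never gives up
(A = \<infinity>) when k confirmations are still missing and his lag is n - k - 1.\<close>
definition race_success :: "real \<Rightarrow> nat \<Rightarrow> nat \<Rightarrow> real" where
  "race_success q k n =
     1 - (1 - q) ^ k * negbin_sum k n q + (q / (1 - q)) ^ n * (1 - q) ^ k * negbin_sum k n (1 - q)"

lemma race_success_0_right [simp]: "race_success q k 0 = 1"
  by (simp add: race_success_def negbin_sum_def)

lemma race_success_0_left: "race_success q 0 n = (q / (1 - q)) ^ n"
  by (simp add: race_success_def negbin_sum_0_left)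

lemma race_success_Suc_Suc:
  assumes "q \<noteq> 1"
  shows "race_success q (Suc k) (Suc n) = q * race_success q (Suc k) n + (1 - q) * race_success q k (Suc n)"
  using assms unfolding race_success_def negbin_sum_Suc_Suc[of k n]
  by (simp add: field_simps)

lemma race_success_0_Suc:
  assumes "q \<noteq> 1"
  shows "race_success q 0 (Suc n) = q * race_success q 0 n + (1 - q) * race_success q 0 (Suc (Suc n))"
proof -
  define l where "l = q / (1 - q)"
  have l: "(1 - q) * l = q" "(1 - q) * (1 + l) = 1"
    using assms by (simp_all add: l_def field_simps)
  have "l ^ Suc n = ((1 - q) * (1 + l)) * l ^ Suc n"
    using l(2) by simp
  also have "\<dots> = ((1 - q) * l) * l ^ n + (1 - q) * l ^ Suc (Suc n)"
    by (simp add: algebra_simps)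
  finally show ?thesis
    unfolding race_success_0_left l_def[symmetric] l(1) .
qed

text \<open>The probability of fewer than n failures before the k-th success when each trial fails
with probability x.\<close>
definition negbin_cdf :: "nat \<Rightarrow> nat \<Rightarrow> real \<Rightarrow> real" where
  "negbin_cdf k n x = (1 - x) ^ k * negbin_sum k n x"

lemma Suc_times_binomial_absorb:
  "Suc m * ((k + Suc m) choose Suc m) = Suc k * ((k + Suc m) choose m)"
proof -
  have "Suc m * ((k + Suc m) choose Suc m) = Suc (k + m) * ((k + m) choose m)"
    using Suc_times_binomial[of m "k + m"] by simp
  also have "\<dots> = Suc k * ((k + Suc m) choose m)"
    using binomial_absorb_comp[of "k + Suc m" m] by simp
  finally show ?thesis .
qed

lemma negbin_cdf_derivative_step:
  fixes B1 B2 x :: real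
  assumes "real (Suc m) * B2 = real (Suc k) * B1"
  shows "- real (Suc k) * B1 * (1 - x) ^ k * x ^ m
      + B2 * (- real (Suc k) * (1 - x) ^ k * x ^ Suc m + (1 - x) ^ Suc k * (real (Suc m) * x ^ m))
    = - real (Suc k) * (B1 + B2) * (1 - x) ^ k * x ^ Suc m"
proof -
  have "B2 * ((1 - x) ^ Suc k * (real (Suc m) * x ^ m)) = (real (Suc m) * B2) * (1 - x) * (1 - x) ^ k * x ^ m"
    by (simp only: power_Suc ac_simps)
  also have "\<dots> = real (Suc k) * B1 * (1 - x) * (1 - x) ^ k * x ^ m"
    by (simp only: assms)
  finally have new_term: "B2 * ((1 - x) ^ Suc k * (real (Suc m) * x ^ m))
      = real (Suc k) * B1 * (1 - x) * (1 - x) ^ k * x ^ m" .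
  show ?thesis
    unfolding distrib_left[of B2] new_term by (simp add: algebra_simps)
qed

lemma has_real_derivative_negbin_cdf:
  "(negbin_cdf (Suc k) (Suc m) has_real_derivative
     - real (Suc k) * real ((k + Suc m) choose m) * (1 - x) ^ k * x ^ m) (at x)"
proof (induction m)
  case 0
  have "negbin_cdf (Suc k) (Suc 0) = (\<lambda>x. (1 - x) ^ Suc k)"
    by (simp add: negbin_cdf_def negbin_sum_def fun_eq_iff)
  moreover have "((\<lambda>x. (1 - x) ^ Suc k) has_real_derivative (1 + real k) * ((0 - 1) * (1 - x) ^ k)) (at x)"
    by (intro DERIV_power_Suc DERIV_diff DERIV_const DERIV_ident)
  ultimately show ?case
    by (simp add: algebra_simps)
next
  case (Suc m)
  define B1 where "B1 = real ((k + Suc m) choose m)"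
  define B2 where "B2 = real ((k + Suc m) choose Suc m)"
  have absorb: "real (Suc m) * B2 = real (Suc k) * B1"
    unfolding B1_def B2_def by (metis Suc_times_binomial_absorb of_nat_mult)
  have pascal: "real ((k + Suc (Suc m)) choose Suc m) = B1 + B2"
    by (simp add: B1_def B2_def)
  have "negbin_cdf (Suc k) (Suc (Suc m))
      = (\<lambda>x. negbin_cdf (Suc k) (Suc m) x + B2 * ((1 - x) ^ Suc k * x ^ Suc m))"
    by (simp add: negbin_cdf_def negbin_sum_Suc[of "Suc k" "Suc m"] B2_def fun_eq_iff algebra_simps)
  moreover have "((\<lambda>x. negbin_cdf (Suc k) (Suc m) x + B2 * ((1 - x) ^ Suc k * x ^ Suc m)) has_real_derivative
      - real (Suc k) * B1 * (1 - x) ^ k * x ^ m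
      + B2 * (- real (Suc k) * (1 - x) ^ k * x ^ Suc m + (1 - x) ^ Suc k * (real (Suc m) * x ^ m))) (at x)"
    unfolding B1_def by (rule derivative_eq_intros Suc.IH refl | simp add: algebra_simps)+
  moreover have "- real (Suc k) * B1 * (1 - x) ^ k * x ^ m
      + B2 * (- real (Suc k) * (1 - x) ^ k * x ^ Suc m + (1 - x) ^ Suc k * (real (Suc m) * x ^ m))
    = - real (Suc k) * (B1 + B2) * (1 - x) ^ k * x ^ Suc m"
    using absorb by (rule negbin_cdf_derivative_step)
  ultimately show ?case
    unfolding pascal by simp
qed

definition beta_half_const :: "nat \<Rightarrow> real" where
  "beta_half_const w = fact (2 * w + 2) / (fact w * fact (Suc w))"

lemma Gamma_half_ratio:
  "Gamma (real (Suc w) + 1/2) / (Gamma (real (Suc w)) * Gamma (1/2)) = beta_half_const w / 4 ^ Suc w"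
proof -
  let ?P = "pochhammer (1/2) (Suc w) :: real"
  have "(1/2 :: real) \<notin> \<int>\<^sub>\<le>\<^sub>0"
    using nonpos_Ints_nonpos by fastforce
  then have "Gamma (real (Suc w) + 1/2) = ?P * Gamma (1/2)"
    by (simp add: pochhammer_Gamma Gamma_one_half_real add.commute)
  moreover have "Gamma (real (Suc w)) = fact w"
    using Gamma_fact[of w] by (simp add: add.commute)
  ultimately have "Gamma (real (Suc w) + 1/2) / (Gamma (real (Suc w)) * Gamma (1/2)) = ?P / fact w"
    by (simp add: Gamma_one_half_real)
  also have "?P = fact (2 * w + 2) / (4 ^ Suc w * fact (Suc w))"
  proof -
    have "2 * Suc w = 2 * w + 2" "(2::real) ^ (2 * Suc w) = 4 ^ Suc w"
      by (simp_all add: power_mult)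
    then have "fact (2 * w + 2) = 4 ^ Suc w * ?P * fact (Suc w)"
      using fact_double[of "Suc w", where 'a = real] by metis
    then show ?thesis
      by (simp add: eq_divide_eq del: fact_Suc)
  qed
  finally show ?thesis
    by (simp add: beta_half_const_def del: fact_Suc)
qed

lemma beta_half_const_binomial: "beta_half_const w = 2 * real (Suc w) * real ((w + Suc w) choose w)"
proof -
  have "2 * w + 2 = Suc (w + Suc w)"
    by simp
  then have "fact (2 * w + 2) = real (Suc (w + Suc w)) * (fact (w + Suc w) :: real)"
    by (metis fact_Suc)
  then show ?thesis
    by (simp add: beta_half_const_def binomial_fact del: fact_Suc)
qed

definition diagonal_race :: "nat \<Rightarrow> real \<Rightarrow> real" where
  "diagonal_race w x = 1 - negbin_cdf (Suc w) (Suc w) x + negbin_cdf (Suc w) (Suc w) (1 - x)"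

lemma race_success_diagonal: "q \<noteq> 1 \<Longrightarrow> race_success q (Suc w) (Suc w) = diagonal_race w q"
  by (simp add: race_success_def diagonal_race_def negbin_cdf_def power_divide)

lemma diagonal_race_0: "diagonal_race w 0 = 0"
  by (simp add: diagonal_race_def negbin_cdf_def negbin_sum_def lessThan_Suc_eq_insert_0 zero_power)

lemma has_real_derivative_diagonal_race:
  "(diagonal_race w has_real_derivative beta_half_const w * (x * (1 - x)) ^ w) (at x)"
proof -
  have "(diagonal_race w has_real_derivative
      - (- real (Suc w) * real ((w + Suc w) choose w) * (1 - x) ^ w * x ^ w)
      + - real (Suc w) * real ((w + Suc w) choose w) * (1 - (1 - x)) ^ w * (1 - x) ^ w * - 1) (at x)"
    unfolding diagonal_race_def[abs_def]
    by (rule derivative_eq_intros has_real_derivative_negbin_cdf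
        DERIV_chain2[OF has_real_derivative_negbin_cdf] refl | simp)+
  then show ?thesis
    unfolding power_mult_distrib beta_half_const_binomial by (simp add: algebra_simps)
qed

definition inv_4pq :: "real \<Rightarrow> real" where
  "inv_4pq y = (1 - sqrt (1 - y)) / 2"

lemma inv_4pq_eq: "q \<le> 1/2 \<Longrightarrow> inv_4pq (4 * (1 - q) * q) = q"
proof -
  assume "q \<le> 1/2"
  moreover have "1 - 4 * (1 - q) * q = (1 - 2 * q)\<^sup>2"
    by (simp add: power2_eq_square algebra_simps)
  ultimately show ?thesis
    by (simp add: inv_4pq_def)
qed

lemma inv_4pq_mult: "y \<le> 1 \<Longrightarrow> inv_4pq y * (1 - inv_4pq y) = y / 4"
proof -
  assume "y \<le> 1"
  then have "sqrt (1 - y) ^ 2 = 1 - y"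
    by simp
  moreover have "inv_4pq y * (1 - inv_4pq y) = (1 - sqrt (1 - y) ^ 2) / 4"
    unfolding inv_4pq_def by (simp add: field_simps power2_eq_square)
  ultimately show ?thesis
    by simp
qed

lemma has_real_derivative_inv_4pq:
  assumes "y < 1"
  shows "(inv_4pq has_real_derivative 1 / (4 * sqrt (1 - y))) (at y)"
proof -
  have "((\<lambda>y. sqrt (1 - y)) has_real_derivative inverse (sqrt (1 - y)) / 2 * (0 - 1)) (at y)"
    using assms by (intro DERIV_chain2[OF DERIV_real_sqrt] derivative_intros) simp
  then have "((\<lambda>y. (1 - sqrt (1 - y)) / 2) has_real_derivative
      (0 - inverse (sqrt (1 - y)) / 2 * (0 - 1)) / 2) (at y)"
    by (intro DERIV_cdivide DERIV_diff DERIV_const)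
  then show ?thesis
    unfolding inv_4pq_def[abs_def] by (simp add: field_simps)
qed

lemma has_real_derivative_diagonal_race_inv_4pq:
  assumes "0 < y" "y < 1"
  shows "((\<lambda>y. diagonal_race w (inv_4pq y)) has_real_derivative
      beta_half_const w / 4 ^ Suc w * (y powr (real (Suc w) - 1) * (1 - y) powr (1/2 - 1))) (at y)"
proof (rule DERIV_cong[OF DERIV_chain2[OF has_real_derivative_diagonal_race has_real_derivative_inv_4pq]])
  have "y powr (real (Suc w) - 1) = y ^ w"
    using assms by (simp add: powr_realpow)
  moreover have "(1 - y) powr (1/2 - 1) = 1 / sqrt (1 - y)"
  proof -
    have "(1 - y) powr (1/2 - 1) = inverse ((1 - y) powr (1/2))"
      using powr_minus[of "1 - y" "1/2"] by simp
    then show ?thesis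
      using assms by (simp add: powr_half_sqrt inverse_eq_divide)
  qed
  moreover have "(inv_4pq y * (1 - inv_4pq y)) ^ w = y ^ w / 4 ^ w"
    unfolding inv_4pq_mult[OF less_imp_le[OF assms(2)]] by (rule power_divide)
  ultimately show "beta_half_const w * (inv_4pq y * (1 - inv_4pq y)) ^ w * (1 / (4 * sqrt (1 - y)))
      = beta_half_const w / 4 ^ Suc w * (y powr (real (Suc w) - 1) * (1 - y) powr (1/2 - 1))"
    by simp
qed (use assms in simp)

lemma reg_inc_beta_half_eq_diagonal_race:
  assumes "0 \<le> x" "x < 1"
  shows "reg_inc_beta x (real (Suc w)) (1/2) = diagonal_race w (inv_4pq x)"
proof -
  have "((\<lambda>t. beta_half_const w / 4 ^ Suc w * (t powr (real (Suc w) - 1) * (1 - t) powr (1/2 - 1)))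
      has_integral diagonal_race w (inv_4pq x) - diagonal_race w (inv_4pq 0)) {0..x}"
  proof (rule fundamental_theorem_of_calculus_interior[OF assms(1)])
    show "continuous_on {0..x} (\<lambda>y. diagonal_race w (inv_4pq y))"
      using assms unfolding diagonal_race_def negbin_cdf_def negbin_sum_def inv_4pq_def
      by (intro continuous_intros) auto
    fix y assume "y \<in> {0<..<x}"
    then show "((\<lambda>y. diagonal_race w (inv_4pq y)) has_vector_derivative
        beta_half_const w / 4 ^ Suc w * (y powr (real (Suc w) - 1) * (1 - y) powr (1/2 - 1))) (at y)"
      using assms has_real_derivative_diagonal_race_inv_4pq[of y w]
      by (simp add: has_real_derivative_iff_has_vector_derivative)
  qed
  then have "((\<lambda>t. beta_half_const w / 4 ^ Suc w * (t powr (real (Suc w) - 1) * (1 - t) powr (1/2 - 1)))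
      has_integral diagonal_race w (inv_4pq x)) {0..x}"
    by (simp add: diagonal_race_0 inv_4pq_def)
  then show ?thesis
    unfolding reg_inc_beta_def Gamma_half_ratio integral_mult_right[symmetric] by (rule integral_unique)
qed

lemma reg_inc_beta_4pq:
  assumes "0 < q" "q < 1/2"
  shows "reg_inc_beta (4 * (1 - q) * q) (real (Suc w)) (1/2) = race_success q (Suc w) (Suc w)"
proof -
  have "1 - 4 * (1 - q) * q = (1 - 2 * q)\<^sup>2"
    by (simp add: power2_eq_square algebra_simps)
  then have "0 \<le> 4 * (1 - q) * q" "4 * (1 - q) * q < 1"
    using assms by (simp_all add: algebra_simps)
  then have "reg_inc_beta (4 * (1 - q) * q) (real (Suc w)) (1/2) = diagonal_race w (inv_4pq (4 * (1 - q) * q))"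
    by (rule reg_inc_beta_half_eq_diagonal_race)
  also have "inv_4pq (4 * (1 - q) * q) = q"
    using assms by (intro inv_4pq_eq) simp
  also have "diagonal_race w q = race_success q (Suc w) (Suc w)"
    using assms by (simp add: race_success_diagonal)
  finally show ?thesis .
qed

lemma convex_comb_diff_divide:
  fixes q c b t d :: real
  shows "(q * c + (1 - q) * b - t) / d = q * ((c - t) / d) + (1 - q) * ((b - t) / d)"
  by (simp add: diff_divide_distrib add_divide_distrib algebra_simps)

lemma harmonic_eq_0_if_boundary_eq_0:
  fixes v :: "nat \<Rightarrow> real"
  assumes "0 \<le> q" "q < 1" and "v 0 = 0" "v N = 0"
    and harmonic: "\<And>n. 0 < n \<Longrightarrow> n < N \<Longrightarrow> v n = q * v (n - 1) + (1 - q) * v (n + 1)"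
    and "n \<le> N"
  shows "v n = 0"
proof -
  define c where "c n = (\<Sum>i<n. (q / (1 - q)) ^ i)" for n
  have c_rec: "(1 - q) * c (Suc (Suc n)) = c (Suc n) - q * c n" for n
    using assms(2) by (simp add: c_def field_simps)
  have v_eq: "v n = v 1 * c n" if "n \<le> N" for n
    using that
  proof (induction n rule: induct_nat_012)
    case (ge2 n)
    have "(1 - q) * v (Suc (Suc n)) = v (Suc n) - q * v n"
      using harmonic[of "Suc n"] ge2.prems by simp
    also have "\<dots> = v 1 * (c (Suc n) - q * c n)"
      using ge2 by (simp add: algebra_simps)
    also have "\<dots> = v 1 * ((1 - q) * c (Suc (Suc n)))"
      by (simp only: c_rec)
    finally show ?case
      using assms(2) by simp
  qed (simp_all add: c_def \<open>v 0 = 0\<close>)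
  show ?thesis
  proof (cases N)
    case (Suc M)
    have "c N = 1 + (\<Sum>i<M. (q / (1 - q)) ^ Suc i)"
      unfolding c_def Suc by (subst sum.lessThan_Suc_shift) simp
    moreover have "(\<Sum>i<M. (q / (1 - q)) ^ Suc i) \<ge> 0"
      using assms(1,2) by (intro sum_nonneg) simp
    ultimately have "v 1 = 0"
      using v_eq[of N] \<open>v N = 0\<close> by simp
    then show ?thesis
      using v_eq[OF \<open>n \<le> N\<close>] by simp
  qed (use assms in simp)
qed

definition honest_count :: "nat \<Rightarrow> bool stream \<Rightarrow> nat" where
  "honest_count n \<omega> = length (filter Not (stake n \<omega>))"

definition attacker_count :: "nat \<Rightarrow> bool stream \<Rightarrow> nat" where
  "attacker_count n \<omega> = length (filter (\<lambda>b. b) (stake n \<omega>))"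

lemma honest_count_0 [simp]: "honest_count 0 \<omega> = 0"
  and honest_count_Suc [simp]: "honest_count (Suc n) (x ## \<omega>) = (if x then 0 else 1) + honest_count n \<omega>"
  by (simp_all add: honest_count_def)

lemma attacker_count_0 [simp]: "attacker_count 0 \<omega> = 0"
  and attacker_count_Suc [simp]: "attacker_count (Suc n) (x ## \<omega>) = (if x then 1 else 0) + attacker_count n \<omega>"
  by (simp_all add: attacker_count_def)

lemma honest_count_mono: "m \<le> n \<Longrightarrow> honest_count m \<omega> \<le> honest_count n \<omega>"
  unfolding honest_count_def by (metis le_add_diff_inverse stake_add filter_append length_append le_add1)

definition race_won :: "nat \<Rightarrow> nat \<Rightarrow> nat \<Rightarrow> int \<Rightarrow> bool stream \<Rightarrow> bool" where
  "race_won z A h L \<omega> \<longleftrightarrow> (\<exists>n. z \<le> h + honest_count n \<omega> \<and>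
     L + int (honest_count n \<omega>) - int (attacker_count n \<omega>) \<le> -1 \<and>
     (\<forall>m\<le>n. L + int (honest_count m \<omega>) - int (attacker_count m \<omega>) < int A))"

lemma measurable_honest_count [measurable]:
  "honest_count n \<in> measurable (stream_space (measure_pmf M)) (count_space UNIV)"
  unfolding honest_count_def by measurable

lemma measurable_attacker_count [measurable]:
  "attacker_count n \<in> measurable (stream_space (measure_pmf M)) (count_space UNIV)"
  unfolding attacker_count_def by measurable

lemma measurable_pred_counts:
  "Measurable.pred (stream_space (measure_pmf M)) (\<lambda>\<omega>. P (honest_count n \<omega>) (attacker_count n \<omega>))"
proof -
  have "(\<lambda>\<omega>. (honest_count n \<omega>, attacker_count n \<omega>))
      \<in> measurable (stream_space (measure_pmf M)) (count_space UNIV)"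
    using pair_measure_countable[of "UNIV :: nat set" "UNIV :: nat set"] by measurable
  from measurable_compose[OF this, of "case_prod P"] show ?thesis
    by simp
qed

lemma measurable_race_won [measurable]:
  "Measurable.pred (stream_space (measure_pmf M)) (race_won z A h L)"
proof -
  note measurable_pred_counts [where P = "\<lambda>a b. z \<le> h + a", measurable]
    measurable_pred_counts [where P = "\<lambda>a b. L + int a - int b \<le> -1", measurable]
    measurable_pred_counts [where P = "\<lambda>a b. L + int a - int b < int A", measurable]
  show ?thesis
    unfolding race_won_def by measurable
qed

lemma ex_nat_split: "(\<exists>n::nat. P n) \<longleftrightarrow> P 0 \<or> (\<exists>n. P (Suc n))"
  by (metis not0_implies_Suc)

lemma race_won_Cons:
  "race_won z A h L (x ## \<omega>) \<longleftrightarrow> (z \<le> h \<and> L \<le> -1) \<or>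
     (L < int A \<and> race_won z A (if x then h else h + 1) (if x then L - 1 else L + 1) \<omega>)"
  unfolding race_won_def
  by (subst ex_nat_split) (cases x; auto simp flip: less_Suc_eq_le simp: All_less_Suc2 algebra_simps)

lemma prob_space_block_space: "prob_space (block_space q)"
  unfolding block_space_def by (rule prob_space.prob_space_stream_space[OF prob_space_measure_pmf])

lemma space_block_space [simp]: "space (block_space q) = UNIV"
  by (simp add: block_space_def space_stream_space)

lemma measure_block_space_UNIV [simp]: "measure (block_space q) UNIV = 1"
  using prob_space.prob_space[OF prob_space_block_space] by simp

lemma measure_block_space_Cons:
  assumes "0 \<le> q" "q \<le> 1" and [measurable]: "Measurable.pred (block_space q) P"
  shows "measure (block_space q) {\<omega>. P \<omega>} =
    q * measure (block_space q) {\<omega>. P (True ## \<omega>)} + (1 - q) * measure (block_space q) {\<omega>. P (False ## \<omega>)}"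
proof -
  let ?S = "block_space q"
  have "{\<omega> \<in> space (stream_space (measure_pmf (bernoulli_pmf q))). P \<omega>}
      \<in> sets (stream_space (measure_pmf (bernoulli_pmf q)))"
    using assms(3) unfolding block_space_def by measurable
  from prob_space.prob_stream_space[OF prob_space_measure_pmf this]
  have "ennreal (measure ?S {\<omega>. P \<omega>}) = (\<integral>\<^sup>+x. ennreal (measure ?S {\<omega>. P (x ## \<omega>)}) \<partial>bernoulli_pmf q)"
    by (simp add: block_space_def space_stream_space)
  also have "\<dots> = ennreal (q * measure ?S {\<omega>. P (True ## \<omega>)} + (1 - q) * measure ?S {\<omega>. P (False ## \<omega>)})"
    using assms(1,2) by (simp add: ennreal_mult'' mult.commute)
  finally show ?thesis
    using assms(1,2) by (subst (asm) ennreal_inj) auto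
qed

lemma measurable_race_won_block_space [measurable]: "Measurable.pred (block_space q) (race_won z A h L)"
  unfolding block_space_def by measurable

lemma sets_race_won [simp]: "{\<omega>. race_won z A h L \<omega>} \<in> sets (block_space q)"
proof -
  have "{\<omega> \<in> space (block_space q). race_won z A h L \<omega>} \<in> sets (block_space q)"
    by measurable
  then show ?thesis
    by simp
qed

lemma measure_honest_count_reaches:
  assumes "0 \<le> q" "q < 1"
  shows "measure (block_space q) {\<omega>. \<exists>n. honest_count n \<omega> = k} = 1"
proof (induction k)
  case 0
  have "{\<omega>. \<exists>n. honest_count n \<omega> = 0} = UNIV"
    by (auto intro: exI[of _ 0])
  then show ?case
    by simp
next
  case (Suc k)
  have [measurable]: "Measurable.pred (block_space q) (\<lambda>\<omega>. \<exists>n. honest_count n \<omega> = j)" for j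
    unfolding block_space_def using measurable_pred_counts[where P = "\<lambda>a b. a = j"] by measurable
  have Cons: "(\<exists>n. honest_count n (x ## \<omega>) = Suc k) \<longleftrightarrow>
      (\<exists>n. honest_count n \<omega> = (if x then Suc k else k))" for x \<omega>
    by (subst ex_nat_split) auto
  have "measure (block_space q) {\<omega>. \<exists>n. honest_count n \<omega> = Suc k} =
      q * measure (block_space q) {\<omega>. \<exists>n. honest_count n \<omega> = Suc k} + (1 - q) * 1"
    (is "?m = _")
    using assms Suc.IH by (subst measure_block_space_Cons) (simp_all add: Cons)
  then have "(1 - q) * (?m - 1) = 0"
    by (simp add: algebra_simps)
  then show ?case
    using assms by simp
qed

definition after_first_true :: "(bool stream \<Rightarrow> bool) \<Rightarrow> bool stream \<Rightarrow> bool" where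
  "after_first_true P \<omega> \<longleftrightarrow> (\<exists>k. \<omega> !! k \<and> (\<forall>j<k. \<not> \<omega> !! j) \<and> P (sdrop (Suc k) \<omega>))"

lemma after_first_true_Cons:
  "after_first_true P (True ## \<omega>) \<longleftrightarrow> P \<omega>"
  "after_first_true P (False ## \<omega>) \<longleftrightarrow> after_first_true P \<omega>"
  unfolding after_first_true_def by (subst ex_nat_split; simp add: All_less_Suc2)+

lemma measurable_after_first_true [measurable]:
  assumes [measurable]: "Measurable.pred (stream_space (measure_pmf M)) P"
  shows "Measurable.pred (stream_space (measure_pmf M)) (after_first_true P)"
  unfolding after_first_true_def by measurable

lemma measure_after_first_true:
  assumes "0 < q" "q \<le> 1" and [measurable]: "Measurable.pred (block_space q) P"
  shows "measure (block_space q) {\<omega>. after_first_true P \<omega>} = measure (block_space q) {\<omega>. P \<omega>}"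
proof -
  have [measurable]: "Measurable.pred (block_space q) (after_first_true P)"
    using assms(3) unfolding block_space_def by measurable
  have "measure (block_space q) {\<omega>. after_first_true P \<omega>} =
      q * measure (block_space q) {\<omega>. P \<omega>} + (1 - q) * measure (block_space q) {\<omega>. after_first_true P \<omega>}"
    (is "?m = _")
    using assms by (subst measure_block_space_Cons) (simp_all add: after_first_true_Cons)
  then have "q * (?m - measure (block_space q) {\<omega>. P \<omega>}) = 0"
    by (simp add: algebra_simps)
  then show ?thesis
    using assms by simp
qed

lemma after_first_true_iff:
  assumes "\<omega> !! k" "\<forall>j<k. \<not> \<omega> !! j"
  shows "after_first_true P \<omega> \<longleftrightarrow> P (sdrop (Suc k) \<omega>)"
  using assms unfolding after_first_true_def by (metis linorder_neqE_nat)

lemma card_filter_sdrop: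
  "card {i \<in> {1..n}. P (\<omega> !! (k + i))} = length (filter P (stake n (sdrop (Suc k) \<omega>)))"
proof -
  have "{i \<in> {1..n}. P (\<omega> !! (k + i))} = Suc ` {j. j < n \<and> P (sdrop (Suc k) \<omega> !! j)}"
    by (auto simp: image_iff gr0_conv_Suc Suc_le_eq sdrop_snth)
  then show ?thesis
    by (auto simp: card_image length_filter_conv_card intro!: arg_cong[where f = card])
qed

lemma attack_succeeds_iff:
  "attack_succeeds z A \<omega> \<longleftrightarrow> after_first_true (race_won z A 0 (-1)) \<omega>"
proof (cases "\<exists>k. \<omega> !! k")
  case True
  define k where "k = premine_end \<omega>"
  have first: "\<omega> !! k" "\<forall>j<k. \<not> \<omega> !! j"
    using True LeastI_ex not_less_Least unfolding k_def premine_end_def by auto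
  have "honest_blocks \<omega> n = honest_count n (sdrop (Suc k) \<omega>)"
    "attacker_blocks \<omega> n = 1 + attacker_count n (sdrop (Suc k) \<omega>)" for n
    unfolding honest_blocks_def attacker_blocks_def honest_count_def attacker_count_def k_def[symmetric]
    using card_filter_sdrop[of n Not] card_filter_sdrop[of n "\<lambda>b. b"] by simp_all
  then show ?thesis
    using True unfolding after_first_true_iff[OF first] attack_succeeds_def race_won_def lag_def
    by (simp add: algebra_simps)
next
  case False
  then show ?thesis
    unfolding attack_succeeds_def after_first_true_def by blast
qed

locale double_spend =
  fixes q :: real and z A :: nat
  assumes q_pos: "0 < q" and q_less_half: "q < 1/2"
begin

sublocale S: prob_space "block_space q"
  by (rule prob_space_block_space)

definition win_prob :: "nat \<Rightarrow> int \<Rightarrow> real" where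
  "win_prob h L = measure (block_space q) {\<omega>. race_won z A h L \<omega>}"

lemma win_prob_rec:
  "win_prob h L =
    (if z \<le> h \<and> L \<le> -1 then 1 else if int A \<le> L then 0
     else q * win_prob h (L - 1) + (1 - q) * win_prob (h + 1) (L + 1))"
proof -
  have first_step: "win_prob h L = q * measure (block_space q) {\<omega>. race_won z A h L (True ## \<omega>)}
      + (1 - q) * measure (block_space q) {\<omega>. race_won z A h L (False ## \<omega>)}"
    unfolding win_prob_def using q_pos q_less_half by (intro measure_block_space_Cons) simp_all
  show ?thesis
  proof (cases "z \<le> h \<and> L \<le> -1")
    case True
    then show ?thesis
      using first_step by (simp add: race_won_Cons)
  next
    case False
    then have not_won: "(z \<le> h \<and> L \<le> -1) = False"
      by simp
    show ?thesis
      using first_step by (cases "int A \<le> L") (simp_all add: race_won_Cons not_won win_prob_def)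
  qed
qed

lemma win_prob_le_1: "win_prob h L \<le> 1"
  unfolding win_prob_def by (rule S.prob_le_1)

lemma win_prob_confirmed: "z \<le> h \<Longrightarrow> win_prob h L = win_prob z L"
  unfolding win_prob_def race_won_def by (auto simp: fun_eq_iff)

lemma win_prob_certain:
  assumes "h \<le> z" "L + int (z - h) \<le> -1"
  shows "win_prob h L = 1"
proof -
  have reach: "{\<omega>. \<exists>n. honest_count n \<omega> = z - h} \<subseteq> {\<omega>. race_won z A h L \<omega>}"
  proof safe
    fix \<omega> n assume n: "honest_count n \<omega> = z - h"
    show "race_won z A h L \<omega>"
      unfolding race_won_def
    proof (intro exI[of _ n] conjI allI impI)
      fix m assume "m \<le> n"
      then have "honest_count m \<omega> \<le> z - h"
        using n honest_count_mono by metis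
      then show "L + int (honest_count m \<omega>) - int (attacker_count m \<omega>) < int A"
        using assms by linarith
    qed (use n assms in simp_all)
  qed
  have "measure (block_space q) {\<omega>. \<exists>n. honest_count n \<omega> = z - h} \<le> win_prob h L"
    unfolding win_prob_def by (rule S.finite_measure_mono[OF reach]) simp
  then have "1 \<le> win_prob h L"
    using measure_honest_count_reaches[of q "z - h"] q_pos q_less_half by simp
  then show ?thesis
    using win_prob_le_1 by (simp add: antisym)
qed

lemma q_ne_1: "q \<noteq> 1"
  using q_less_half by simp

lemma threshold_success_bounds: "0 < race_success q 0 (A + 1)" "race_success q 0 (A + 1) < 1"
proof -
  have l: "0 < q / (1 - q)" "q / (1 - q) < 1"
    using q_pos q_less_half by (simp_all add: field_simps)
  show "0 < race_success q 0 (A + 1)"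
    unfolding race_success_0_left using l(1) by (rule zero_less_power)
  show "race_success q 0 (A + 1) < 1"
    unfolding race_success_0_left Suc_eq_plus1[symmetric] using l by (rule power_Suc_less_one)
qed

definition normalized_success :: "nat \<Rightarrow> int \<Rightarrow> real" where
  "normalized_success k L =
     (race_success q k (nat (L + int k + 1)) - race_success q 0 (A + 1)) / (1 - race_success q 0 (A + 1))"

lemma normalized_success_won: "L + int k \<le> -1 \<Longrightarrow> normalized_success k L = 1"
  using threshold_success_bounds by (simp add: normalized_success_def)

lemma normalized_success_threshold: "normalized_success 0 (int A) = 0"
  by (simp add: normalized_success_def nat_add_distrib)

lemma normalized_success_Suc:
  "normalized_success (Suc k) L = q * normalized_success (Suc k) (L - 1) + (1 - q) * normalized_success k (L + 1)"
proof (cases "L + int k + 2 \<le> 0")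
  case True
  then show ?thesis
    using normalized_success_won[of L "Suc k"] normalized_success_won[of "L - 1" "Suc k"]
      normalized_success_won[of "L + 1" k] by (simp add: algebra_simps)
next
  case False
  define n where "n = nat (L + int k + 1)"
  have n: "nat (L + int (Suc k) + 1) = Suc n" "nat (L - 1 + int (Suc k) + 1) = n" "nat (L + 1 + int k + 1) = Suc n"
    using False by (simp_all add: n_def)
  show ?thesis
    unfolding normalized_success_def n race_success_Suc_Suc[OF q_ne_1, of k n]
    by (rule convex_comb_diff_divide)
qed

lemma normalized_success_0:
  assumes "0 \<le> L"
  shows "normalized_success 0 L = q * normalized_success 0 (L - 1) + (1 - q) * normalized_success 0 (L + 1)"
proof -
  define n where "n = nat L"
  have n: "nat (L + int 0 + 1) = Suc n" "nat (L - 1 + int 0 + 1) = n" "nat (L + 1 + int 0 + 1) = Suc (Suc n)"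
    using assms by (simp_all add: n_def nat_add_distrib)
  show ?thesis
    unfolding normalized_success_def n race_success_0_Suc[OF q_ne_1, of n]
    by (rule convex_comb_diff_divide)
qed


lemma win_prob_confirmed_eq_normalized:
  assumes "-1 \<le> L" "L \<le> int A"
  shows "win_prob z L = normalized_success 0 L"
proof -
  define v where "v n = win_prob z (int n - 1) - normalized_success 0 (int n - 1)" for n
  have harmonic: "v n = q * v (n - 1) + (1 - q) * v (n + 1)" if "0 < n" "n < Suc A" for n
  proof -
    have "win_prob z (int n - 1) = q * win_prob z (int (n - 1) - 1) + (1 - q) * win_prob z (int (n + 1) - 1)"
      using that win_prob_rec[of z "int n - 1"] win_prob_confirmed[of "z + 1"] by simp
    then show ?thesis
      using that normalized_success_0[of "int n - 1"] by (simp add: v_def algebra_simps)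
  qed
  have "0 \<le> q" "q < 1"
    using q_pos q_less_half by simp_all
  moreover have "v 0 = 0"
    using win_prob_rec[of z "-1"] normalized_success_won[of "-1" 0] by (simp add: v_def)
  moreover have "v (Suc A) = 0"
    using win_prob_rec[of z "int A"] normalized_success_threshold by (simp add: v_def)
  moreover have "nat (L + 1) \<le> Suc A"
    using assms by simp
  ultimately have "v (nat (L + 1)) = 0"
    using harmonic harmonic_eq_0_if_boundary_eq_0[of q v "Suc A"] by blast
  then show ?thesis
    using assms by (simp add: v_def)
qed

lemma win_prob_eq_normalized:
  "k \<le> z \<Longrightarrow> L + int k \<le> int A \<Longrightarrow> win_prob (z - k) L = normalized_success k L"
proof (induction k arbitrary: L)
  case 0
  then show ?case
    using win_prob_rec[of z L] normalized_success_won[of L 0] win_prob_confirmed_eq_normalized[of L]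
    by (cases "L \<le> -1") simp_all
next
  case (Suc k)
  have start: "win_prob (z - Suc k) L = normalized_success (Suc k) L" if "L + int (Suc k) \<le> -1" for L
    using Suc.prems that win_prob_certain normalized_success_won by simp
  have "L + int (Suc k) \<le> int A \<longrightarrow> win_prob (z - Suc k) L = normalized_success (Suc k) L"
    if "- int (Suc k) - 1 \<le> L" for L
    using that
  proof (induction L rule: int_ge_induct)
    case base
    then show ?case
      using start by simp
  next
    case (step L)
    show ?case
    proof
      assume L: "L + 1 + int (Suc k) \<le> int A"
      have "\<not> z \<le> z - Suc k" "z - Suc k + 1 = z - k"
        using Suc.prems by simp_all
      then have "win_prob (z - Suc k) (L + 1) = q * win_prob (z - Suc k) L + (1 - q) * win_prob (z - k) (L + 1 + 1)"
        using L win_prob_rec[of "z - Suc k" "L + 1"] by simp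
      also have "\<dots> = q * normalized_success (Suc k) L + (1 - q) * normalized_success k (L + 1 + 1)"
        using step.IH Suc.IH[of "L + 1 + 1"] Suc.prems L by simp
      also have "\<dots> = normalized_success (Suc k) (L + 1)"
        using normalized_success_Suc[of k "L + 1"] by simp
      finally show "win_prob (z - Suc k) (L + 1) = normalized_success (Suc k) (L + 1)" .
    qed
  qed
  then show ?case
    using Suc.prems start by (cases "L + int (Suc k) \<le> -1") simp_all
qed

lemma P_A_eq_win_prob: "P_A q A z = win_prob 0 (-1)"
  using measure_after_first_true[of q "race_won z A 0 (-1)"] q_pos q_less_half
  unfolding P_A_def win_prob_def space_block_space attack_succeeds_iff by simp

end

theorem theorem1:
  fixes q :: real and z A :: nat
  assumes "0 < q" and "q < 1/2" and "z \<ge> 1" and "A \<ge> z"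
  shows "P_A q A z =
    (reg_inc_beta (4 * (1 - q) * q) (real z) (1/2) - (q / (1 - q)) ^ (A + 1))
      / (1 - (q / (1 - q)) ^ (A + 1))"
proof -
  interpret double_spend q z A
    using assms by unfold_locales
  obtain w where w: "z = Suc w"
    using assms(3) by (cases z) auto
  have "P_A q A z = normalized_success z (-1)"
    using P_A_eq_win_prob win_prob_eq_normalized[of z "-1"] assms(4) by simp
  also have "\<dots> = (race_success q z z - race_success q 0 (A + 1)) / (1 - race_success q 0 (A + 1))"
    by (simp add: normalized_success_def)
  also have "race_success q z z = reg_inc_beta (4 * (1 - q) * q) (real z) (1/2)"
    unfolding w using reg_inc_beta_4pq[OF assms(1,2)] by simp
  finally show ?thesis
    by (simp add: race_success_0_left)
qed

end
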